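(* Every forest of order $n$ has at most $4^{n/5}$ perfect total dominating sets. The bound is attained by disjoint unions of stars on $5$ vertices ($K_{1,4}$).
   Context: A perfect total dominating set of a graph $G=(V,E)$ is a set $D\subseteq V$ such that every vertex of $V$ (whether in $D$ or not) has exactly one neighbour in $D$. Order = number of vertices. *)

theory Defs
  imports Complex_Main
begin

definition simple_graph :: "'a set \<Rightarrow> ('a \<Rightarrow> 'a \<Rightarrow> bool) \<Rightarrow> bool" where
  "simple_graph V E \<longleftrightarrow> finite V \<and> (\<forall>x y. E x y \<longrightarrow> x \<in> V \<and> y \<in> V)
     \<and> (\<forall>x y. E x y \<longrightarrow> E y x) \<and> (\<forall>x. \<not> E x x)"

definition is_cycle :: "'a set \<Rightarrow> ('a \<Rightarrow> 'a \<Rightarrow> bool) \<Rightarrow> 'a list \<Rightarrow> bool" where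
  "is_cycle V E cs \<longleftrightarrow> length cs \<ge> 3 \<and> distinct cs \<and> set cs \<subseteq> V
     \<and> (\<forall>i < length cs. E (cs ! i) (cs ! ((i + 1) mod length cs)))"

definition forest :: "'a set \<Rightarrow> ('a \<Rightarrow> 'a \<Rightarrow> bool) \<Rightarrow> bool" where
  "forest V E \<longleftrightarrow> simple_graph V E \<and> (\<nexists>cs. is_cycle V E cs)"

definition nbhd :: "'a set \<Rightarrow> ('a \<Rightarrow> 'a \<Rightarrow> bool) \<Rightarrow> 'a \<Rightarrow> 'a set" where
  "nbhd V E v = {u \<in> V. E v u}"

definition perfect_total_dominating :: "'a set \<Rightarrow> ('a \<Rightarrow> 'a \<Rightarrow> bool) \<Rightarrow> 'a set \<Rightarrow> bool" where
  "perfect_total_dominating V E D \<longleftrightarrow> D \<subseteq> V \<and> (\<forall>v \<in> V. card (nbhd V E v \<inter> D) = 1)"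

definition ptds_sets :: "'a set \<Rightarrow> ('a \<Rightarrow> 'a \<Rightarrow> bool) \<Rightarrow> 'a set set" where
  "ptds_sets V E = {D. perfect_total_dominating V E D}"

text \<open>Disjoint union of k copies of the star K_{1,4}: vertices (i,j), i<k, j<5;
(i,0) is the centre of the i-th star.\<close>
definition stars_V :: "nat \<Rightarrow> (nat \<times> nat) set" where
  "stars_V k = {(i, j). i < k \<and> j < 5}"

definition stars_E :: "nat \<Rightarrow> nat \<times> nat \<Rightarrow> nat \<times> nat \<Rightarrow> bool" where
  "stars_E k p q \<longleftrightarrow> p \<in> stars_V k \<and> q \<in> stars_V k \<and> fst p = fst q
     \<and> ((snd p = 0 \<and> snd q \<noteq> 0) \<or> (snd p \<noteq> 0 \<and> snd q = 0))"

end

theory Submission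
  imports Defs "HOL-Library.FuncSet"
begin

text \<open>
  Every nonempty induced subgraph of a forest has a vertex of degree at most one. If such a
  vertex v is isolated there is no perfect total dominating set; otherwise its neighbour u lies
  in every such set D, and D contains exactly one neighbour y of u, whose only neighbour in D
  is u. Removing N(u) \<union> N(y), which has at least deg u + 1 vertices, leaves a perfect total
  dominating set of the remaining induced subgraph, and D is recovered from it and y. By
  induction the number of sets is at most deg u \<cdot> 4^((n - deg u - 1)/5) \<le> 4^(n/5), using
  d \<le> 4^((d+1)/5), with equality exactly at d = 4. In a disjoint union of copies of K_{1,4}
  every centre is forced and each star independently contributes one of its four leaves.
\<close>

definition graph_path :: "'a set \<Rightarrow> ('a \<Rightarrow> 'a \<Rightarrow> bool) \<Rightarrow> 'a list \<Rightarrow> bool" where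
  "graph_path W E xs \<longleftrightarrow>
     distinct xs \<and> set xs \<subseteq> W \<and> (\<forall>i. Suc i < length xs \<longrightarrow> E (xs ! i) (xs ! Suc i))"

lemma graph_path_Cons:
  assumes "graph_path W E xs" "z \<in> W" "z \<notin> set xs" "xs \<noteq> [] \<Longrightarrow> E z (hd xs)"
  shows "graph_path W E (z # xs)"
  unfolding graph_path_def
proof (intro conjI allI impI)
  show "distinct (z # xs)" "set (z # xs) \<subseteq> W"
    using assms unfolding graph_path_def by auto
  fix i assume "Suc i < length (z # xs)"
  then show "E ((z # xs) ! i) ((z # xs) ! Suc i)"
    using assms unfolding graph_path_def by (cases i) (auto simp: hd_conv_nth)
qed

text \<open>
  A path whose first vertex has a neighbour z other than its successor either extends to z
  or, if z lies on it, closes a cycle through the initial segment up to z.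
\<close>
lemma graph_path_extend:
  assumes sg: "simple_graph V E" and acyclic: "\<nexists>cs. is_cycle V E cs" and W: "W \<subseteq> V"
    and deg: "\<forall>v\<in>W. card (nbhd W E v) \<ge> 2" and p: "graph_path W E xs" and "xs \<noteq> []"
  shows "\<exists>ys. graph_path W E ys \<and> length ys = Suc (length xs)"
proof -
  have sym: "\<And>x y. E x y \<Longrightarrow> E y x" and irr: "\<And>x. \<not> E x x"
    using sg unfolding simple_graph_def by auto
  obtain x rest where xs: "xs = x # rest" using \<open>xs \<noteq> []\<close> by (cases xs) auto
  have xW: "x \<in> W" using p xs unfolding graph_path_def by auto
  have "finite (nbhd W E x)"
    using sg W unfolding simple_graph_def nbhd_def by (auto intro: finite_subset)
  moreover have "\<not> card (nbhd W E x) \<le> Suc 0" using deg xW by fastforce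
  ultimately obtain z where z: "z \<in> nbhd W E x" "z \<noteq> (if rest = [] then x else xs ! 1)"
    by (metis card_le_Suc0_iff_eq)
  have Exz: "E x z" and zW: "z \<in> W" using z unfolding nbhd_def by auto
  show ?thesis
  proof (cases "z \<in> set xs")
    case False
    then have "graph_path W E (z # xs)"
      using graph_path_Cons[OF p zW] sym[OF Exz] xs by simp
    then show ?thesis by fastforce
  next
    case True
    then obtain j where j: "j < length xs" "xs ! j = z" by (metis in_set_conv_nth)
    have "j \<noteq> 0" using j Exz irr xs by (metis nth_Cons_0)
    moreover have "j \<noteq> 1" using j z xs by auto
    ultimately have j2: "2 \<le> j" by simp
    define cs where "cs = take (Suc j) xs"
    have lcs: "length cs = Suc j" using j cs_def by simp
    have "is_cycle V E cs"
      unfolding is_cycle_def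
    proof (intro conjI allI impI)
      show "3 \<le> length cs" using lcs j2 by simp
      show "distinct cs" "set cs \<subseteq> V"
        using p W unfolding cs_def graph_path_def by (auto dest: in_set_takeD)
      fix i assume i: "i < length cs"
      show "E (cs ! i) (cs ! ((i + 1) mod length cs))"
      proof (cases "i < j")
        case True
        then show ?thesis using p j lcs unfolding graph_path_def cs_def by simp
      next
        case False
        then have "i = j" using i lcs by simp
        moreover have "cs ! j = z" using j unfolding cs_def by simp
        moreover have "cs ! 0 = x" using xs unfolding cs_def by simp
        ultimately show ?thesis using lcs sym[OF Exz] by simp
      qed
    qed
    with acyclic show ?thesis by blast
  qed
qed

lemma forest_induced_subgraph_has_leaf:
  assumes "forest V E" and W: "W \<subseteq> V" "W \<noteq> {}"
  shows "\<exists>v\<in>W. card (nbhd W E v) \<le> 1"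
proof (rule ccontr)
  assume "\<not> ?thesis"
  then have deg: "\<forall>v\<in>W. card (nbhd W E v) \<ge> 2" by auto
  have sg: "simple_graph V E" and acyclic: "\<nexists>cs. is_cycle V E cs"
    using assms(1) unfolding forest_def by auto
  have long: "\<exists>xs. graph_path W E xs \<and> length xs = Suc k" for k
  proof (induction k)
    case 0
    from \<open>W \<noteq> {}\<close> obtain w where "w \<in> W" by auto
    then have "graph_path W E [w]" unfolding graph_path_def by auto
    then show ?case by auto
  next
    case (Suc k)
    then show ?case using graph_path_extend[OF sg acyclic W(1) deg] by fastforce
  qed
  obtain xs where xs: "graph_path W E xs" "length xs = Suc (card W)" using long by blast
  have "finite W" using sg W unfolding simple_graph_def by (auto intro: finite_subset)
  then have "length xs \<le> card W"
    using xs(1) card_mono[of W "set xs"] distinct_card[of xs] unfolding graph_path_def by simp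
  with xs(2) show False by simp
qed

lemma finite_ptds_sets: "finite W \<Longrightarrow> finite (ptds_sets W E)"
  unfolding ptds_sets_def perfect_total_dominating_def
  by (rule finite_subset[of _ "Pow W"]) auto

lemma ptds_sets_empty: "ptds_sets {} E = {{}}"
  unfolding ptds_sets_def perfect_total_dominating_def by auto

lemma ptds_sets_isolated_vertex:
  assumes "v \<in> W" "nbhd W E v = {}"
  shows "ptds_sets W E = {}"
proof -
  have "card (nbhd W E v \<inter> D) \<noteq> 1" for D using assms(2) by simp
  then show ?thesis using assms(1) unfolding ptds_sets_def perfect_total_dominating_def by blast
qed

lemma perfect_total_dominating_nbhd_singleton:
  assumes "D \<in> ptds_sets W E" "w \<in> W"
  obtains y where "nbhd W E w \<inter> D = {y}"
proof -
  have "card (nbhd W E w \<inter> D) = 1"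
    using assms unfolding ptds_sets_def perfect_total_dominating_def by auto
  then show ?thesis using that by (elim card_1_singletonE)
qed

lemma ptds_sets_Diff:
  assumes D: "D \<in> ptds_sets W E"
    and separated: "\<And>w z. w \<in> W - X \<Longrightarrow> z \<in> D \<inter> X \<Longrightarrow> \<not> E w z"
  shows "D - X \<in> ptds_sets (W - X) E"
proof -
  have DW: "D \<subseteq> W" and one: "\<And>w. w \<in> W \<Longrightarrow> card (nbhd W E w \<inter> D) = 1"
    using D unfolding ptds_sets_def perfect_total_dominating_def by auto
  have "nbhd (W - X) E w \<inter> (D - X) = nbhd W E w \<inter> D" if "w \<in> W - X" for w
  proof
    show "nbhd (W - X) E w \<inter> (D - X) \<subseteq> nbhd W E w \<inter> D" unfolding nbhd_def by auto
    show "nbhd W E w \<inter> D \<subseteq> nbhd (W - X) E w \<inter> (D - X)"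
      using that separated DW unfolding nbhd_def by auto
  qed
  then show ?thesis
    using DW one unfolding ptds_sets_def perfect_total_dominating_def by auto
qed

text \<open>
  The neighbour u of the pendant vertex v lies in D; if y is its neighbour in D, then u and y
  dominate each other, so no vertex outside N(u) \<union> N(y) has a neighbour among them.
\<close>
lemma ptds_sets_pendant_subset:
  assumes sym: "\<And>x y. E x y \<Longrightarrow> E y x" and v: "v \<in> W" "nbhd W E v = {u}"
  shows "ptds_sets W E \<subseteq>
    (\<Union>y\<in>nbhd W E u. (\<lambda>D'. D' \<union> {u, y}) ` ptds_sets (W - (nbhd W E u \<union> nbhd W E y)) E)"
proof
  fix D assume D: "D \<in> ptds_sets W E"
  have uW: "u \<in> W" using v unfolding nbhd_def by auto
  obtain x where "nbhd W E v \<inter> D = {x}"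
    using perfect_total_dominating_nbhd_singleton[OF D v(1)] .
  then have uD: "u \<in> D" using v(2) by auto
  obtain y where Nu: "nbhd W E u \<inter> D = {y}"
    using perfect_total_dominating_nbhd_singleton[OF D uW] .
  then have yD: "y \<in> D" and yNu: "y \<in> nbhd W E u" by auto
  then have yW: "y \<in> W" and "u \<in> nbhd W E y" using sym uW unfolding nbhd_def by auto
  moreover obtain z where "nbhd W E y \<inter> D = {z}"
    using perfect_total_dominating_nbhd_singleton[OF D yW] .
  ultimately have Ny: "nbhd W E y \<inter> D = {u}" using uD by auto
  define X where "X = nbhd W E u \<union> nbhd W E y"
  have "D - X \<in> ptds_sets (W - X) E"
  proof (rule ptds_sets_Diff[OF D])
    fix w z assume w: "w \<in> W - X" and z: "z \<in> D \<inter> X"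
    then have "z = y \<or> z = u" using Nu Ny unfolding X_def by auto
    then show "\<not> E w z" using w sym unfolding X_def nbhd_def by auto
  qed
  moreover have "D = (D - X) \<union> {u, y}" using Nu Ny uD yD unfolding X_def by auto
  ultimately have "D \<in> (\<lambda>D'. D' \<union> {u, y}) ` ptds_sets (W - X) E" by (rule rev_image_eqI)
  then show "D \<in> (\<Union>y\<in>nbhd W E u. (\<lambda>D'. D' \<union> {u, y}) `
      ptds_sets (W - (nbhd W E u \<union> nbhd W E y)) E)"
    using yNu unfolding X_def by blast
qed

lemma card_ptds_sets_pendant_le:
  assumes "finite W" "\<And>x y. E x y \<Longrightarrow> E y x" "v \<in> W" "nbhd W E v = {u}"
  shows "card (ptds_sets W E)
    \<le> (\<Sum>y\<in>nbhd W E u. card (ptds_sets (W - (nbhd W E u \<union> nbhd W E y)) E))"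
proof -
  let ?R = "\<lambda>y. ptds_sets (W - (nbhd W E u \<union> nbhd W E y)) E"
  have finN: "finite (nbhd W E u)" using assms(1) unfolding nbhd_def by simp
  have finR: "finite (?R y)" for y using assms(1) by (simp add: finite_ptds_sets)
  have "card (ptds_sets W E) \<le> card (\<Union>y\<in>nbhd W E u. (\<lambda>D'. D' \<union> {u, y}) ` ?R y)"
    using ptds_sets_pendant_subset[OF assms(2-4)] finN finR by (intro card_mono) auto
  also have "\<dots> \<le> (\<Sum>y\<in>nbhd W E u. card ((\<lambda>D'. D' \<union> {u, y}) ` ?R y))"
    by (rule card_UN_le[OF finN])
  also have "\<dots> \<le> (\<Sum>y\<in>nbhd W E u. card (?R y))"
    by (intro sum_mono card_image_le finR)
  finally show ?thesis .
qed

lemma card_Diff_nbhds_le: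
  assumes "finite W" "\<And>x y. E x y \<Longrightarrow> E y x" "\<And>x. \<not> E x x"
    and "u \<in> W" "y \<in> nbhd W E u"
  shows "card (W - (nbhd W E u \<union> nbhd W E y)) + card (nbhd W E u) + 1 \<le> card W"
proof -
  let ?X = "nbhd W E u \<union> nbhd W E y"
  have XW: "?X \<subseteq> W" unfolding nbhd_def by auto
  have finX: "finite ?X" using assms(1) XW by (rule finite_subset[rotated])
  have "u \<notin> nbhd W E u" using assms(3) unfolding nbhd_def by auto
  then have "card (insert u (nbhd W E u)) = card (nbhd W E u) + 1"
    using assms(1) unfolding nbhd_def by simp
  moreover have "insert u (nbhd W E u) \<subseteq> ?X" using assms unfolding nbhd_def by auto
  ultimately have "card (nbhd W E u) + 1 \<le> card ?X" using card_mono[OF finX] by metis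
  moreover have "card (W - ?X) = card W - card ?X" using card_Diff_subset[OF finX XW] .
  ultimately show ?thesis using card_mono[OF assms(1) XW] by linarith
qed

lemma pow5_le_four_pow_Suc: "(d::nat) ^ 5 \<le> 4 ^ (d + 1)"
proof (cases "d < 4")
  case True
  then have "d = 0 \<or> d = 1 \<or> d = 2 \<or> d = 3" by arith
  then show ?thesis by auto
next
  case False
  then have "4 \<le> d" by simp
  then show ?thesis
  proof (induction d rule: dec_induct)
    case base then show ?case by simp
  next
    case (step n)
    have "(4 * (n + 1)) ^ 5 \<le> (5 * n) ^ 5" using step by (intro power_mono) simp_all
    then have "1024 * (n + 1) ^ 5 \<le> 3125 * n ^ 5" by (simp only: power_mult_distrib) simp
    then have "(n + 1) ^ 5 \<le> 4 * n ^ 5" by linarith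
    also have "\<dots> \<le> 4 * 4 ^ (n + 1)" using step by simp
    finally show ?case by simp
  qed
qed

lemma real_le_four_powr: "real d \<le> 4 powr ((real d + 1) / 5)"
proof -
  have "(4 powr ((real d + 1) / 5)) ^ 5 = (4::real) powr (5 * ((real d + 1) / 5))"
    by (simp add: powr_power)
  also have "\<dots> = 4 powr (real d + 1)" by (rule arg_cong[where f = "\<lambda>t. 4 powr t"]) simp
  also have "\<dots> = 4 ^ (d + 1)" using powr_realpow[of 4 "d + 1"] by (simp add: add.commute)
  finally have "real d ^ 5 \<le> (4 powr ((real d + 1) / 5)) ^ 5"
    using pow5_le_four_pow_Suc[of d] by (metis of_nat_le_iff of_nat_numeral of_nat_power)
  then show ?thesis using power_le_imp_le_base[of "real d" 4 "4 powr ((real d + 1) / 5)"] by simp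
qed

lemma card_ptds_sets_le:
  assumes fin: "finite V" and sym: "\<And>x y. E x y \<Longrightarrow> E y x" and irr: "\<And>x. \<not> E x x"
    and leaf: "\<And>W. W \<subseteq> V \<Longrightarrow> W \<noteq> {} \<Longrightarrow> \<exists>v\<in>W. card (nbhd W E v) \<le> 1"
    and "W \<subseteq> V"
  shows "real (card (ptds_sets W E)) \<le> 4 powr (real (card W) / 5)"
  using \<open>W \<subseteq> V\<close>
proof (induction "card W" arbitrary: W rule: less_induct)
  case less
  have finW: "finite W" using less.prems fin by (rule finite_subset)
  show ?case
  proof (cases "W = {}")
    case True
    then show ?thesis by (simp add: ptds_sets_empty)
  next
    case False
    then obtain v where v: "v \<in> W" "card (nbhd W E v) \<le> 1" using leaf less.prems by blast
    have "finite (nbhd W E v)" using finW unfolding nbhd_def by simp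
    then consider "nbhd W E v = {}" | u where "nbhd W E v = {u}"
      using v(2) by (metis card_0_eq card_1_singletonE le_neq_implies_less less_one)
    then show ?thesis
    proof cases
      case 1
      then show ?thesis using ptds_sets_isolated_vertex[OF v(1)] by simp
    next
      case (2 u)
      have uW: "u \<in> W" using 2 unfolding nbhd_def by auto
      define d where "d = card (nbhd W E u)"
      let ?R = "\<lambda>y. ptds_sets (W - (nbhd W E u \<union> nbhd W E y)) E"
      have IH: "real (card (?R y)) \<le> 4 powr ((real (card W) - real d - 1) / 5)"
        if "y \<in> nbhd W E u" for y
      proof -
        have size: "card (W - (nbhd W E u \<union> nbhd W E y)) + d + 1 \<le> card W"
          unfolding d_def by (rule card_Diff_nbhds_le[OF finW sym irr uW that])
        have "real (card (?R y)) \<le> 4 powr (real (card (W - (nbhd W E u \<union> nbhd W E y))) / 5)"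
          using less.hyps[of "W - (nbhd W E u \<union> nbhd W E y)"] size less.prems by auto
        also have "\<dots> \<le> 4 powr ((real (card W) - real d - 1) / 5)"
          using size by (intro powr_mono) auto
        finally show ?thesis .
      qed
      have "real (card (ptds_sets W E)) \<le> (\<Sum>y\<in>nbhd W E u. real (card (?R y)))"
        using card_ptds_sets_pendant_le[OF finW sym v(1) 2] by (metis of_nat_le_iff of_nat_sum)
      also have "\<dots> \<le> real d * 4 powr ((real (card W) - real d - 1) / 5)"
        using sum_mono[OF IH] by (simp add: d_def)
      also have "\<dots> \<le> 4 powr ((real d + 1) / 5) * 4 powr ((real (card W) - real d - 1) / 5)"
        by (intro mult_right_mono real_le_four_powr) simp
      also have "\<dots> = 4 powr (real (card W) / 5)"
        by (simp add: powr_add[symmetric] add_divide_distrib[symmetric])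
      finally show ?thesis .
    qed
  qed
qed

lemma stars_V_eq: "stars_V k = {..<k} \<times> {..<5}"
  unfolding stars_V_def by auto

lemma card_stars_V: "card (stars_V k) = 5 * k"
  by (simp add: stars_V_eq card_cartesian_product)

lemma stars_E_sym: "stars_E k p q \<Longrightarrow> stars_E k q p"
  unfolding stars_E_def by auto

lemma stars_E_leaf_unique:
  assumes "stars_E k p q" "stars_E k p r" "snd p \<noteq> 0" shows "q = r"
  using assms unfolding stars_E_def by (cases q, cases r) auto

text \<open>Every edge has a leaf endpoint, and a leaf cannot have two distinct neighbours on a cycle.\<close>
lemma forest_stars: "forest (stars_V k) (stars_E k)"
  unfolding forest_def
proof (intro conjI notI)
  have "finite (stars_V k)" by (simp add: stars_V_eq)
  then show "simple_graph (stars_V k) (stars_E k)"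
    unfolding simple_graph_def stars_E_def by auto
next
  assume "\<exists>cs. is_cycle (stars_V k) (stars_E k) cs"
  then obtain cs where c: "is_cycle (stars_V k) (stars_E k) cs" by blast
  define n where "n = length cs"
  have n3: "n \<ge> 3" and dist: "distinct cs"
    and adj: "\<And>i. i < n \<Longrightarrow> stars_E k (cs ! i) (cs ! ((i + 1) mod n))"
    using c unfolding is_cycle_def n_def by auto
  have e01: "stars_E k (cs ! 0) (cs ! 1)" using adj[of 0] n3 by simp
  show False
  proof (cases "snd (cs ! 1) = 0")
    case False
    have "stars_E k (cs ! 1) (cs ! 2)" using adj[of 1] n3 by (simp add: numeral_2_eq_2)
    then have "cs ! 0 = cs ! 2" using stars_E_leaf_unique[OF stars_E_sym[OF e01] _ False] by blast
    moreover have "(cs ! 0 = cs ! 2) = (0 = (2::nat))"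
      by (rule nth_eq_iff_index_eq[OF dist]) (use n3 n_def in auto)
    ultimately show False by simp
  next
    case True
    then have s0: "snd (cs ! 0) \<noteq> 0" using e01 unfolding stars_E_def by auto
    have "stars_E k (cs ! (n - 1)) (cs ! 0)" using adj[of "n - 1"] n3 by simp
    then have "cs ! 1 = cs ! (n - 1)" using stars_E_leaf_unique[OF e01 stars_E_sym s0] by blast
    then show False using dist n3 n_def by (simp add: nth_eq_iff_index_eq)
  qed
qed

lemma nbhd_stars:
  assumes "(i, j) \<in> stars_V k"
  shows "nbhd (stars_V k) (stars_E k) (i, j) =
           (if j = 0 then {(i, l) | l. 1 \<le> l \<and> l \<le> 4} else {(i, 0)})"
  using assms unfolding nbhd_def stars_E_def stars_V_def by auto

definition stars_ptds :: "nat \<Rightarrow> (nat \<Rightarrow> nat) \<Rightarrow> (nat \<times> nat) set" where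
  "stars_ptds k f = {(i, 0) | i. i < k} \<union> {(i, f i) | i. i < k}"

lemma stars_ptds_in_ptds_sets:
  assumes f: "f \<in> PiE {..<k} (\<lambda>_. {1..4})"
  shows "stars_ptds k f \<in> ptds_sets (stars_V k) (stars_E k)"
  unfolding ptds_sets_def perfect_total_dominating_def
proof (intro CollectI conjI ballI)
  have fi: "\<And>i. i < k \<Longrightarrow> 1 \<le> f i \<and> f i \<le> 4" using f by (simp add: PiE_iff)
  then show "stars_ptds k f \<subseteq> stars_V k" unfolding stars_ptds_def stars_V_def by force
  fix p assume p: "p \<in> stars_V k"
  then obtain i j where p_eq: "p = (i, j)" and ik: "i < k" unfolding stars_V_def by auto
  have "nbhd (stars_V k) (stars_E k) p \<inter> stars_ptds k f = {(i, if j = 0 then f i else 0)}"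
  proof (cases "j = 0")
    case True
    then show ?thesis
      using nbhd_stars[of i j k] p p_eq fi[OF ik] ik unfolding stars_ptds_def by auto
  next
    case False
    then show ?thesis using nbhd_stars[of i j k] p p_eq ik unfolding stars_ptds_def by auto
  qed
  then show "card (nbhd (stars_V k) (stars_E k) p \<inter> stars_ptds k f) = 1" by simp
qed

lemma ptds_sets_stars_subset:
  "ptds_sets (stars_V k) (stars_E k) \<subseteq> stars_ptds k ` PiE {..<k} (\<lambda>_. {1..4})"
proof
  fix D assume D: "D \<in> ptds_sets (stars_V k) (stars_E k)"
  have DV: "D \<subseteq> stars_V k" using D unfolding ptds_sets_def perfect_total_dominating_def by auto
  have centre: "(i, 0) \<in> D" if "i < k" for i
  proof -
    have i1: "(i, 1) \<in> stars_V k" using that unfolding stars_V_def by auto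
    with D obtain x where "nbhd (stars_V k) (stars_E k) (i, 1) \<inter> D = {x}"
      by (rule perfect_total_dominating_nbhd_singleton)
    moreover have "nbhd (stars_V k) (stars_E k) (i, 1) = {(i, 0)}" using nbhd_stars[OF i1] by simp
    ultimately have "{(i, 0)} \<inter> D = {x}" by simp
    then show ?thesis by (metis Int_iff singletonD singletonI)
  qed
  have "\<exists>l. 1 \<le> l \<and> l \<le> 4 \<and> nbhd (stars_V k) (stars_E k) (i, 0) \<inter> D = {(i, l)}"
    if "i < k" for i
  proof -
    have i0: "(i, 0) \<in> stars_V k" using that unfolding stars_V_def by auto
    with D obtain x where x: "nbhd (stars_V k) (stars_E k) (i, 0) \<inter> D = {x}"
      by (rule perfect_total_dominating_nbhd_singleton)
    then show ?thesis using nbhd_stars[OF i0] by auto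
  qed
  then obtain f where f: "\<And>i. i < k \<Longrightarrow>
      1 \<le> f i \<and> f i \<le> 4 \<and> nbhd (stars_V k) (stars_E k) (i, 0) \<inter> D = {(i, f i)}"
    by metis
  have "restrict f {..<k} \<in> PiE {..<k} (\<lambda>_. {1..4})" using f by (simp add: PiE_iff)
  moreover have "D = stars_ptds k (restrict f {..<k})"
  proof
    show "stars_ptds k (restrict f {..<k}) \<subseteq> D" using centre f unfolding stars_ptds_def by auto
    show "D \<subseteq> stars_ptds k (restrict f {..<k})"
    proof
      fix p assume pD: "p \<in> D"
      then obtain i j where p_eq: "p = (i, j)" and ik: "i < k" and "j < 5"
        using DV unfolding stars_V_def by auto
      show "p \<in> stars_ptds k (restrict f {..<k})"
      proof (cases "j = 0")
        case True then show ?thesis using p_eq ik unfolding stars_ptds_def by auto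
      next
        case False
        have "(i, 0) \<in> stars_V k" using ik unfolding stars_V_def by auto
        from nbhd_stars[OF this] have "p \<in> nbhd (stars_V k) (stars_E k) (i, 0) \<inter> D"
          using pD p_eq False \<open>j < 5\<close> by auto
        then show ?thesis using f[OF ik] ik unfolding stars_ptds_def by auto
      qed
    qed
  qed
  ultimately show "D \<in> stars_ptds k ` PiE {..<k} (\<lambda>_. {1..4})" by blast
qed

lemma inj_on_stars_ptds: "inj_on (stars_ptds k) (PiE {..<k} (\<lambda>_. {1..4}))"
proof
  fix f g assume f: "f \<in> PiE {..<k} (\<lambda>_. {1..4})" and g: "g \<in> PiE {..<k} (\<lambda>_. {1..4})"
    and eq: "stars_ptds k f = stars_ptds k g"
  show "f = g"
  proof (rule PiE_ext[OF f g])
    fix i assume i: "i \<in> {..<k}"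
    have "f i \<in> {1..4}" "g i \<in> {1..4}" using PiE_mem[OF f i] PiE_mem[OF g i] .
    then have "f i \<noteq> 0" "g i \<noteq> 0" by auto
    moreover have "(i, f i) \<in> stars_ptds k g" using eq i unfolding stars_ptds_def by blast
    ultimately show "f i = g i" unfolding stars_ptds_def by auto
  qed
qed

lemma card_ptds_sets_stars: "card (ptds_sets (stars_V k) (stars_E k)) = 4 ^ k"
proof -
  have "ptds_sets (stars_V k) (stars_E k) = stars_ptds k ` PiE {..<k} (\<lambda>_. {1..4})"
    using ptds_sets_stars_subset stars_ptds_in_ptds_sets by blast
  then show ?thesis using card_image[OF inj_on_stars_ptds] by (simp add: card_PiE)
qed

theorem mainTheorem19:
  shows "(\<forall>(V :: 'a set) E. forest V E \<longrightarrow>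
            real (card (ptds_sets V E)) \<le> 4 powr (real (card V) / 5))
       \<and> (\<forall>k. forest (stars_V k) (stars_E k)
            \<and> real (card (ptds_sets (stars_V k) (stars_E k)))
                = 4 powr (real (card (stars_V k)) / 5))"
proof (intro conjI allI impI)
  fix V :: "'a set" and E
  assume forest: "forest V E"
  then have "finite V" "\<And>x y. E x y \<Longrightarrow> E y x" "\<And>x. \<not> E x x"
    unfolding forest_def simple_graph_def by auto
  with forest show "real (card (ptds_sets V E)) \<le> 4 powr (real (card V) / 5)"
    by (intro card_ptds_sets_le forest_induced_subgraph_has_leaf) auto
next
  fix k
  show "forest (stars_V k) (stars_E k)" by (rule forest_stars)
  have "4 powr (real (card (stars_V k)) / 5) = 4 powr real k" by (simp add: card_stars_V)
  also have "\<dots> = 4 ^ k" by (simp add: powr_realpow)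
  finally show "real (card (ptds_sets (stars_V k) (stars_E k)))
      = 4 powr (real (card (stars_V k)) / 5)"
    by (simp add: card_ptds_sets_stars)
qed

end
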